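(* Let $\mathcal{T}=\langle\Sigma^*\times\mathcal{M},Q,I,F,\Delta\rangle$ be a real-time monoidal finite-state transducer with output monoid $\mathcal{M}=\langle M,\circ,e\rangle$. Let $\mathcal{A}^{sq}=\langle\mathcal{M}\times\mathcal{M},Q\times Q,I\times I,F\times F,\Delta_{sq}\rangle$ where $\Delta_{sq}=\{\langle\langle p_1,p_2\rangle,\langle m_1,m_2\rangle,\langle q_1,q_2\rangle\rangle:\exists a\in\Sigma\ \langle p_i,\langle a,m_i\rangle,q_i\rangle\in\Delta\text{ for }i=1,2\}$. Then $\mathcal{A}^{sq}$ is a squared output automaton for $\mathcal{T}$.
   Context: A real-time monoidal finite-state transducer has finite $\Delta\subseteq Q\times(\Sigma\times M)\times Q$. For a monoidal automaton with transition relation $\Delta$ over a monoid with unit $e$, the generalized transition relation $\Delta^*$ is the least set containing $\langle q,e,q\rangle$ for every state $q$ and closed under: $\langle q_1,w,q_2\rangle\in\Delta^*$, $\langle q_2,a,q_3\rangle\in\Delta$ imply $\langle q_1,w\circ a,q_3\rangle\in\Delta^*$ (for the transducer the unit is $\langle\varepsilon,e\rangle$; for $\mathcal{M}\times\mathcal{M}$ it is $\langle e,e\rangle$ with componentwise product). A monoidal automaton $\langle\mathcal{M}\times\mathcal{M},Q\times Q,I\times I,F\times F,\Delta_2\rangle$ with finite $\Delta_2$ is a squared output automaton for $\mathcal{T}$ if for all $p_1,p_2,q_1,q_2\in Q$ and $m,n\in M$: $\langle\langle p_1,p_2\rangle,\langle m,n\rangle,\langle q_1,q_2\rangle\rangle\in\Delta_2^*$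 iff there is $u\in\Sigma^*$ with $\langle p_1,\langle u,m\rangle,q_1\rangle\in\Delta^*$ and $\langle p_2,\langle u,n\rangle,q_2\rangle\in\Delta^*$. *)

theory Defs
  imports Main
begin

definition monoid_on :: "('m \<Rightarrow> 'm \<Rightarrow> 'm) \<Rightarrow> 'm \<Rightarrow> bool" where
  "monoid_on mult e \<longleftrightarrow> (\<forall>a b c. mult (mult a b) c = mult a (mult b c))
     \<and> (\<forall>a. mult e a = a) \<and> (\<forall>a. mult a e = a)"

inductive_set gen_trans ::
  "'q set \<Rightarrow> ('l \<Rightarrow> 'l \<Rightarrow> 'l) \<Rightarrow> 'l \<Rightarrow> ('q \<times> 'l \<times> 'q) set \<Rightarrow> ('q \<times> 'l \<times> 'q) set"
  for Q mult e D where
  refl: "q \<in> Q \<Longrightarrow> (q, e, q) \<in> gen_trans Q mult e D"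
| step: "(q1, w, q2) \<in> gen_trans Q mult e D \<Longrightarrow> (q2, a, q3) \<in> D
         \<Longrightarrow> (q1, mult w a, q3) \<in> gen_trans Q mult e D"

definition real_time_transducer ::
  "('m \<Rightarrow> 'm \<Rightarrow> 'm) \<Rightarrow> 'm \<Rightarrow> 'q set \<Rightarrow> 'q set \<Rightarrow> 'q set \<Rightarrow> ('q \<times> ('s \<times> 'm) \<times> 'q) set \<Rightarrow> bool" where
  "real_time_transducer mult e Q I F D \<longleftrightarrow> monoid_on mult e \<and> finite Q \<and> I \<subseteq> Q \<and> F \<subseteq> Q
     \<and> finite D \<and> (\<forall>(p, l, q) \<in> D. p \<in> Q \<and> q \<in> Q)"

definition tr_mult :: "('m \<Rightarrow> 'm \<Rightarrow> 'm) \<Rightarrow> 's list \<times> 'm \<Rightarrow> 's list \<times> 'm \<Rightarrow> 's list \<times> 'm" where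
  "tr_mult mult x y = (fst x @ fst y, mult (snd x) (snd y))"

definition embed_trans :: "('q \<times> ('s \<times> 'm) \<times> 'q) set \<Rightarrow> ('q \<times> ('s list \<times> 'm) \<times> 'q) set" where
  "embed_trans D = {(p, ([a], m), q) | p a m q. (p, (a, m), q) \<in> D}"

definition tr_gen :: "('m \<Rightarrow> 'm \<Rightarrow> 'm) \<Rightarrow> 'm \<Rightarrow> 'q set \<Rightarrow> ('q \<times> ('s \<times> 'm) \<times> 'q) set
   \<Rightarrow> ('q \<times> ('s list \<times> 'm) \<times> 'q) set" where
  "tr_gen mult e Q D = gen_trans Q (tr_mult mult) ([], e) (embed_trans D)"

definition pair_mult :: "('m \<Rightarrow> 'm \<Rightarrow> 'm) \<Rightarrow> 'm \<times> 'm \<Rightarrow> 'm \<times> 'm \<Rightarrow> 'm \<times> 'm" where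
  "pair_mult mult x y = (mult (fst x) (fst y), mult (snd x) (snd y))"

definition squared_output_automaton ::
  "('m \<Rightarrow> 'm \<Rightarrow> 'm) \<Rightarrow> 'm \<Rightarrow> 'q set \<Rightarrow> ('q \<times> ('s \<times> 'm) \<times> 'q) set
   \<Rightarrow> (('q \<times> 'q) \<times> ('m \<times> 'm) \<times> ('q \<times> 'q)) set \<Rightarrow> bool" where
  "squared_output_automaton mult e Q D D2 \<longleftrightarrow>
     finite D2 \<and> (\<forall>(p, l, q) \<in> D2. p \<in> Q \<times> Q \<and> q \<in> Q \<times> Q) \<and>
     (\<forall>p1\<in>Q. \<forall>p2\<in>Q. \<forall>q1\<in>Q. \<forall>q2\<in>Q. \<forall>m n.
        ((p1, p2), (m, n), (q1, q2)) \<in> gen_trans (Q \<times> Q) (pair_mult mult) (e, e) D2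
        \<longleftrightarrow> (\<exists>u. (p1, (u, m), q1) \<in> tr_gen mult e Q D \<and> (p2, (u, n), q2) \<in> tr_gen mult e Q D))"

definition delta_sq :: "('q \<times> ('s \<times> 'm) \<times> 'q) set \<Rightarrow> (('q \<times> 'q) \<times> ('m \<times> 'm) \<times> ('q \<times> 'q)) set" where
  "delta_sq D = {((p1, p2), (m1, m2), (q1, q2)) | p1 p2 m1 m2 q1 q2.
      \<exists>a. (p1, (a, m1), q1) \<in> D \<and> (p2, (a, m2), q2) \<in> D}"

end

theory Submission
  imports Defs
begin

text \<open>A run of the squared automaton is a pair of runs of the transducer reading the same input
  word letter by letter, so both directions follow by induction on the length of the run.\<close>

lemma tr_gen_refl: "q \<in> Q \<Longrightarrow> (q, ([], e), q) \<in> tr_gen mult e Q D"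
  unfolding tr_gen_def by (rule gen_trans.refl)

lemma tr_gen_snoc:
  assumes "(p, (u, m), q) \<in> tr_gen mult e Q D" and "(q, (a, m'), r) \<in> D"
  shows "(p, (u @ [a], mult m m'), r) \<in> tr_gen mult e Q D"
proof -
  have "(q, ([a], m'), r) \<in> embed_trans D"
    using assms(2) unfolding embed_trans_def by blast
  from gen_trans.step[OF assms(1)[unfolded tr_gen_def] this] show ?thesis
    by (simp add: tr_gen_def tr_mult_def)
qed

lemma tr_gen_NilE:
  assumes "(p, ([], m), q) \<in> tr_gen mult e Q D"
  shows "m = e \<and> p = q \<and> p \<in> Q"
  using assms unfolding tr_gen_def
  by (cases rule: gen_trans.cases) (auto simp: tr_mult_def embed_trans_def)

lemma tr_gen_snocE:
  assumes "(p, (u @ [a], m), r) \<in> tr_gen mult e Q D"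
  obtains m\<^sub>1 m\<^sub>2 q where "m = mult m\<^sub>1 m\<^sub>2"
    and "(p, (u, m\<^sub>1), q) \<in> tr_gen mult e Q D" and "(q, (a, m\<^sub>2), r) \<in> D"
  using assms unfolding tr_gen_def
  by (cases rule: gen_trans.cases) (auto simp: tr_mult_def embed_trans_def)

lemma delta_sq_run_imp_common_input:
  assumes "(P, L, R) \<in> gen_trans (Q \<times> Q) (pair_mult mult) (e, e) (delta_sq D)"
  shows "\<exists>u. (fst P, (u, fst L), fst R) \<in> tr_gen mult e Q D
    \<and> (snd P, (u, snd L), snd R) \<in> tr_gen mult e Q D"
  using assms
proof (induction rule: gen_trans.induct)
  case (refl q)
  then show ?case by (intro exI[of _ "[]"]) (auto intro: tr_gen_refl)
next
  case (step P w R l S)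
  then obtain u where u: "(fst P, (u, fst w), fst R) \<in> tr_gen mult e Q D"
    "(snd P, (u, snd w), snd R) \<in> tr_gen mult e Q D" by auto
  from step.hyps(2) obtain a where a: "(fst R, (a, fst l), fst S) \<in> D" "(snd R, (a, snd l), snd S) \<in> D"
    unfolding delta_sq_def by auto
  show ?case
    using tr_gen_snoc[OF u(1) a(1)] tr_gen_snoc[OF u(2) a(2)] by (auto simp: pair_mult_def)
qed

lemma common_input_imp_delta_sq_run:
  assumes "(p\<^sub>1, (u, m), q\<^sub>1) \<in> tr_gen mult e Q D" and "(p\<^sub>2, (u, n), q\<^sub>2) \<in> tr_gen mult e Q D"
  shows "((p\<^sub>1, p\<^sub>2), (m, n), (q\<^sub>1, q\<^sub>2)) \<in> gen_trans (Q \<times> Q) (pair_mult mult) (e, e) (delta_sq D)"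
  using assms
proof (induction u arbitrary: m n q\<^sub>1 q\<^sub>2 rule: rev_induct)
  case Nil
  then show ?case
    using gen_trans.refl[of "(p\<^sub>1, p\<^sub>2)" "Q \<times> Q"] by (auto dest!: tr_gen_NilE)
next
  case (snoc a u)
  obtain m\<^sub>1 m\<^sub>2 r\<^sub>1 where m: "m = mult m\<^sub>1 m\<^sub>2"
    and run\<^sub>1: "(p\<^sub>1, (u, m\<^sub>1), r\<^sub>1) \<in> tr_gen mult e Q D" and last\<^sub>1: "(r\<^sub>1, (a, m\<^sub>2), q\<^sub>1) \<in> D"
    using tr_gen_snocE[OF snoc.prems(1)] .
  obtain n\<^sub>1 n\<^sub>2 r\<^sub>2 where n: "n = mult n\<^sub>1 n\<^sub>2"
    and run\<^sub>2: "(p\<^sub>2, (u, n\<^sub>1), r\<^sub>2) \<in> tr_gen mult e Q D" and last\<^sub>2: "(r\<^sub>2, (a, n\<^sub>2), q\<^sub>2) \<in> D"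
    using tr_gen_snocE[OF snoc.prems(2)] .
  have "((r\<^sub>1, r\<^sub>2), (m\<^sub>2, n\<^sub>2), (q\<^sub>1, q\<^sub>2)) \<in> delta_sq D"
    using last\<^sub>1 last\<^sub>2 unfolding delta_sq_def by blast
  from gen_trans.step[OF snoc.IH[OF run\<^sub>1 run\<^sub>2] this] show ?case
    by (simp add: m n pair_mult_def)
qed

lemma finite_delta_sq:
  assumes "finite D"
  shows "finite (delta_sq D)"
proof -
  have "delta_sq D \<subseteq> (\<lambda>((p\<^sub>1, (_, m\<^sub>1), q\<^sub>1), (p\<^sub>2, (_, m\<^sub>2), q\<^sub>2)). ((p\<^sub>1, p\<^sub>2), (m\<^sub>1, m\<^sub>2), (q\<^sub>1, q\<^sub>2))) ` (D \<times> D)"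
    (is "_ \<subseteq> ?image")
  proof
    fix x assume "x \<in> delta_sq D"
    then obtain p\<^sub>1 p\<^sub>2 a m\<^sub>1 m\<^sub>2 q\<^sub>1 q\<^sub>2 where "x = ((p\<^sub>1, p\<^sub>2), (m\<^sub>1, m\<^sub>2), (q\<^sub>1, q\<^sub>2))"
      and "((p\<^sub>1, (a, m\<^sub>1), q\<^sub>1), (p\<^sub>2, (a, m\<^sub>2), q\<^sub>2)) \<in> D \<times> D"
      unfolding delta_sq_def by blast
    then show "x \<in> ?image" by force
  qed
  then show ?thesis
    using assms by (auto intro: finite_subset)
qed

lemma delta_sq_states:
  assumes "\<forall>(p, l, q) \<in> D. p \<in> Q \<and> q \<in> Q"
  shows "\<forall>(P, l, R) \<in> delta_sq D. P \<in> Q \<times> Q \<and> R \<in> Q \<times> Q"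
  using assms unfolding delta_sq_def by fastforce

theorem proposition2:
  fixes mult :: "'m \<Rightarrow> 'm \<Rightarrow> 'm" and e :: 'm and Q I F :: "'q set"
    and D :: "('q \<times> ('s \<times> 'm) \<times> 'q) set"
  assumes "real_time_transducer mult e Q I F D"
  shows "squared_output_automaton mult e Q D (delta_sq D)"
proof -
  have "finite D" and "\<forall>(p, l, q) \<in> D. p \<in> Q \<and> q \<in> Q"
    using assms unfolding real_time_transducer_def by auto
  then show ?thesis
    unfolding squared_output_automaton_def
    using finite_delta_sq delta_sq_states
      delta_sq_run_imp_common_input[where P = "(p\<^sub>1, p\<^sub>2)" and L = "(m, n)" and R = "(q\<^sub>1, q\<^sub>2)"
        for p\<^sub>1 p\<^sub>2 m n q\<^sub>1 q\<^sub>2]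
      common_input_imp_delta_sq_run
    by (metis fst_conv snd_conv)
qed

end
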